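(* Let $\tau>0$ and $f\in C(\mathbb R_+\times\mathbb R,\mathbb R)$ be regular and asymptotically $\tau$-periodic in time, $f=P+R$. Assume the $\tau$-periodic solutions of $x'=P(t,x)$ are isolated, and that for some $u_0$ the solution $\varphi(t,u_0,f)$ of $x'=f(t,x)$, $x(0)=u_0$, is bounded on $\mathbb R_+$. Then $\varphi(t,u_0,f)$ is asymptotically $\tau$-periodic: there is a continuous $\tau$-periodic $p:\mathbb R_+\to\mathbb R$ with $\varphi(t,u_0,f)-p(t)\to0$ as $t\to+\infty$.
   Context: $C(\mathbb R_+\times\mathbb R,\mathbb R)$ has the compact-open topology; $f^h(t,x)=f(t+h,x)$; $H(f)$ is the closure of $\{f^h:h\ge0\}$. $f$ is regular if for every $g\in H(f)$ and $v\in\mathbb R$ the equation $y'=g(t,y)$ has a unique solution $\varphi(t,v,g)$ with $\varphi(0,v,g)=v$, defined on $\mathbb R_+$. $f$ is asymptotically $\tau$-periodic in time if $f=P+R$ with $P,R$ continuous, $P(t+\tau,x)=P(t,x)$, and $R(t,x)\to0$ as $t\to+\infty$ uniformly in $x$ on compact sets. A $\tau$-periodic solution $\varphi(t,u_0,P)$ (i.e. $\varphi(\tau,u_0,P)=u_0$) of $x'=P(t,x)$ is isolated if there is $\delta>0$ such that no $u\ne u_0$ with $|u-u_0|<\delta$ gives a $\tau$-periodic solution $\varphi(t,u,P)$. *)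

theory Defs
  imports "HOL-Analysis.Analysis"
begin

text \<open>Functions R+ x R -> R are represented as curried functions real => real => real;
  only their values on {0..} x UNIV matter.\<close>

definition cont_RR :: "(real \<Rightarrow> real \<Rightarrow> real) \<Rightarrow> bool" where
  "cont_RR f \<longleftrightarrow> continuous_on ({0..} \<times> UNIV) (\<lambda>(t,x). f t x)"

definition shift :: "real \<Rightarrow> (real \<Rightarrow> real \<Rightarrow> real) \<Rightarrow> (real \<Rightarrow> real \<Rightarrow> real)" where
  "shift h f = (\<lambda>t x. f (t + h) x)"

text \<open>Hull: closure of the positive translates in the compact-open topology
  (basic neighbourhoods of g: sup over a compact K of |k - g| < e).\<close>
definition hull_H :: "(real \<Rightarrow> real \<Rightarrow> real) \<Rightarrow> (real \<Rightarrow> real \<Rightarrow> real) set" where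
  "hull_H f = {g. cont_RR g \<and>
     (\<forall>K e. compact K \<and> K \<subseteq> {0..} \<times> UNIV \<and> e > 0 \<longrightarrow>
        (\<exists>h\<ge>0. \<forall>(t,x)\<in>K. \<bar>shift h f t x - g t x\<bar> < e))}"

definition is_solution :: "(real \<Rightarrow> real \<Rightarrow> real) \<Rightarrow> real \<Rightarrow> (real \<Rightarrow> real) \<Rightarrow> bool" where
  "is_solution g v y \<longleftrightarrow> y 0 = v \<and>
     (\<forall>t\<ge>0. (y has_real_derivative g t (y t)) (at t within {0..}))"

definition regular :: "(real \<Rightarrow> real \<Rightarrow> real) \<Rightarrow> bool" where
  "regular f \<longleftrightarrow> (\<forall>g\<in>hull_H f. \<forall>v. \<exists>y. is_solution g v y \<and>
      (\<forall>z. is_solution g v z \<longrightarrow> (\<forall>t\<ge>0. z t = y t)))"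

definition asympt_periodic_decomp ::
  "real \<Rightarrow> (real \<Rightarrow> real \<Rightarrow> real) \<Rightarrow> (real \<Rightarrow> real \<Rightarrow> real) \<Rightarrow> (real \<Rightarrow> real \<Rightarrow> real) \<Rightarrow> bool" where
  "asympt_periodic_decomp \<tau> f P R \<longleftrightarrow> cont_RR P \<and> cont_RR R \<and>
     (\<forall>t\<ge>0. \<forall>x. f t x = P t x + R t x) \<and>
     (\<forall>t\<ge>0. \<forall>x. P (t + \<tau>) x = P t x) \<and>
     (\<forall>K e. compact K \<and> e > 0 \<longrightarrow> (\<exists>T. \<forall>t\<ge>T. \<forall>x\<in>K. \<bar>R t x\<bar> < e))"

definition periodic_solutions_isolated :: "real \<Rightarrow> (real \<Rightarrow> real \<Rightarrow> real) \<Rightarrow> bool" where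
  "periodic_solutions_isolated \<tau> P \<longleftrightarrow>
     (\<forall>w y. is_solution P w y \<and> y \<tau> = w \<longrightarrow>
        (\<exists>\<delta>>0. \<forall>u z. u \<noteq> w \<and> \<bar>u - w\<bar> < \<delta> \<and> is_solution P u z \<longrightarrow> z \<tau> \<noteq> u))"

end

theory Submission
  imports Defs "HOL-Complex_Analysis.Great_Picard"
begin

text \<open>Sample the bounded solution at the periods, \<open>x\<^sub>n = y(n\<tau>)\<close>. By Kamke's convergence
  theorem the segments \<open>y(\<cdot> + n\<tau>)\<close> on \<open>[0, \<tau>]\<close> approach the solutions of the limiting
  periodic equation \<open>x' = P(t, x)\<close> with the same initial values, so \<open>x\<^sub>n\<^sub>+\<^sub>1 - \<Phi>(x\<^sub>n) \<rightarrow> 0\<close>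
  for the period map \<open>\<Phi>\<close> of that equation. For scalar equations \<open>\<Phi>\<close> is monotone, and a
  sequence asymptotically following a monotone map cannot oscillate across a point that
  \<open>\<Phi>\<close> does not fix; since the fixed points of \<open>\<Phi>\<close> (the periodic solutions) are isolated,
  \<open>x\<^sub>n\<close> converges to a fixed point \<open>w\<close>, and \<open>y\<close> approaches the periodic solution through \<open>w\<close>.\<close>

section \<open>Monotone recursions with isolated fixed points\<close>

lemma frequently_if_eventually_subseq:
  assumes "strict_mono r" and "\<forall>\<^sub>F k in sequentially. P (r k)"
  shows "\<exists>\<^sub>F n in sequentially. P n"
  unfolding frequently_sequentially
proof
  fix N
  obtain K where "\<forall>k\<ge>K. P (r k)" using assms(2) unfolding eventually_sequentially by blast
  moreover have "N \<le> r (max K N)" using seq_suble[OF assms(1), of "max K N"] by linarith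
  ultimately show "\<exists>n\<ge>N. P n" by auto
qed

lemma bounded_nonconvergent_oscillates:
  fixes x :: "nat \<Rightarrow> real"
  assumes "bounded (range x)" and "\<not> convergent x"
  obtains a b where "a < b"
    and "\<And>c. a < c \<Longrightarrow> c < b \<Longrightarrow>
           (\<exists>\<^sub>F n in sequentially. x n < c) \<and> (\<exists>\<^sub>F n in sequentially. c < x n)"
proof -
  obtain l r where r: "strict_mono r" "(x \<circ> r) \<longlonglongrightarrow> l"
    using bounded_imp_convergent_subsequence[OF assms(1)] by blast
  have below: "\<exists>\<^sub>F n in sequentially. x n < c" if "l < c" for c
  proof -
    have "\<forall>\<^sub>F k in sequentially. x (r k) < c"
      using order_tendstoD(2)[OF r(2) that] by simp
    then show ?thesis by (rule frequently_if_eventually_subseq[OF r(1)])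
  qed
  have above: "\<exists>\<^sub>F n in sequentially. c < x n" if "c < l" for c
  proof -
    have "\<forall>\<^sub>F k in sequentially. c < x (r k)"
      using order_tendstoD(1)[OF r(2) that] by simp
    then show ?thesis by (rule frequently_if_eventually_subseq[OF r(1)])
  qed
  have "\<not> x \<longlonglongrightarrow> l" using assms(2) by (auto simp: convergent_def)
  then obtain e where e: "e > 0" "\<exists>\<^sub>F n in sequentially. e \<le> \<bar>x n - l\<bar>"
    unfolding tendsto_iff by (auto simp: dist_real_def not_eventually not_less)
  then have "\<exists>\<^sub>F n in sequentially. l + e \<le> x n \<or> x n \<le> l - e"
    by (auto elim!: frequently_elim1)
  then consider "\<exists>\<^sub>F n in sequentially. l + e \<le> x n" | "\<exists>\<^sub>F n in sequentially. x n \<le> l - e"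
    unfolding frequently_disj_iff by blast
  then show ?thesis
  proof cases
    case 1
    show ?thesis
    proof (rule that[of l "l + e"])
      fix c assume "l < c" "c < l + e"
      moreover from this have "\<exists>\<^sub>F n in sequentially. c < x n"
        using 1 by (elim frequently_elim1) linarith
      ultimately show "(\<exists>\<^sub>F n in sequentially. x n < c) \<and> (\<exists>\<^sub>F n in sequentially. c < x n)"
        using below by blast
    qed (use e in simp)
  next
    case 2
    show ?thesis
    proof (rule that[of "l - e" l])
      fix c assume "l - e < c" "c < l"
      moreover from this have "\<exists>\<^sub>F n in sequentially. x n < c"
        using 2 by (elim frequently_elim1) linarith
      ultimately show "(\<exists>\<^sub>F n in sequentially. x n < c) \<and> (\<exists>\<^sub>F n in sequentially. c < x n)"
        using above by blast
    qed (use e in simp)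
  qed
qed

lemma monotone_recursion_stays_above:
  fixes x :: "nat \<Rightarrow> real" and \<Phi> :: "real \<Rightarrow> real"
  assumes "mono \<Phi>" and "(\<lambda>n. x (Suc n) - \<Phi> (x n)) \<longlonglongrightarrow> 0"
    and "c < \<Phi> c" and "\<exists>\<^sub>F n in sequentially. c < x n"
  shows "\<forall>\<^sub>F n in sequentially. c \<le> x n"
proof -
  obtain N where N: "\<And>n. n \<ge> N \<Longrightarrow> \<bar>x (Suc n) - \<Phi> (x n)\<bar> < \<Phi> c - c"
    using assms(2,3) unfolding LIMSEQ_iff by fastforce
  obtain n0 where n0: "n0 \<ge> N" "c < x n0"
    using assms(4) unfolding frequently_sequentially by blast
  have "c \<le> x (n0 + j)" for j
  proof (induction j)
    case 0
    show ?case using n0 by simp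
  next
    case (Suc j)
    have "\<Phi> c \<le> \<Phi> (x (n0 + j))" using Suc monoD[OF assms(1)] by blast
    moreover have "\<bar>x (Suc (n0 + j)) - \<Phi> (x (n0 + j))\<bar> < \<Phi> c - c" using N n0 by simp
    ultimately show ?case by simp
  qed
  then show ?thesis
    unfolding eventually_sequentially by (metis le_add_diff_inverse)
qed

text \<open>The case \<open>\<Phi> c < c\<close> is the previous lemma for the reflected recursion
  \<open>u \<mapsto> - \<Phi> (- u)\<close> and the sequence \<open>- x\<close>.\<close>
lemma monotone_recursion_crossed_point_fixed:
  fixes x :: "nat \<Rightarrow> real" and \<Phi> :: "real \<Rightarrow> real"
  assumes mono: "mono \<Phi>" and close: "(\<lambda>n. x (Suc n) - \<Phi> (x n)) \<longlonglongrightarrow> 0"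
    and below: "\<exists>\<^sub>F n in sequentially. x n < c" and above: "\<exists>\<^sub>F n in sequentially. c < x n"
  shows "\<Phi> c = c"
proof (rule ccontr)
  assume "\<Phi> c \<noteq> c"
  then consider "c < \<Phi> c" | "\<Phi> c < c" by linarith
  then show False
  proof cases
    case 1
    have "\<forall>\<^sub>F n in sequentially. c \<le> x n"
      by (rule monotone_recursion_stays_above[OF mono close 1 above])
    with below show False
      by (simp add: frequently_def not_less)
  next
    case 2
    have "mono (\<lambda>u. - \<Phi> (- u))" using mono by (auto simp: mono_def)
    moreover have "(\<lambda>n. - x (Suc n) - - \<Phi> (- (- x n))) \<longlonglongrightarrow> 0"
      using tendsto_minus[OF close] by simp
    moreover have "\<exists>\<^sub>F n in sequentially. - c < - x n" using below by simp
    ultimately have "\<forall>\<^sub>F n in sequentially. - c \<le> - x n"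
      using 2 monotone_recursion_stays_above[where x="\<lambda>n. - x n" and c="- c"] by simp
    with above show False
      by (simp add: frequently_def not_less)
  qed
qed

lemma monotone_recursion_convergent:
  fixes x :: "nat \<Rightarrow> real" and \<Phi> :: "real \<Rightarrow> real"
  assumes mono: "mono \<Phi>" and close: "(\<lambda>n. x (Suc n) - \<Phi> (x n)) \<longlonglongrightarrow> 0"
    and bounded: "bounded (range x)"
    and isolated: "\<And>w. \<Phi> w = w \<Longrightarrow> \<exists>\<delta>>0. \<forall>u. u \<noteq> w \<and> \<bar>u - w\<bar> < \<delta> \<longrightarrow> \<Phi> u \<noteq> u"
  shows "convergent x"
proof (rule ccontr)
  assume "\<not> convergent x"
  then obtain a b where "a < b"
    and osc: "\<And>c. a < c \<Longrightarrow> c < b \<Longrightarrow>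
           (\<exists>\<^sub>F n in sequentially. x n < c) \<and> (\<exists>\<^sub>F n in sequentially. c < x n)"
    using bounded_nonconvergent_oscillates[OF bounded] by blast
  have fixed: "\<Phi> c = c" if "a < c" "c < b" for c
    using osc[OF that] monotone_recursion_crossed_point_fixed[OF mono close] by blast
  define m where "m = (a + b) / 2"
  have "a < m" "m < b" using \<open>a < b\<close> by (auto simp: m_def)
  then obtain \<delta> where \<delta>: "\<delta> > 0" "\<forall>u. u \<noteq> m \<and> \<bar>u - m\<bar> < \<delta> \<longrightarrow> \<Phi> u \<noteq> u"
    using isolated[OF fixed] by blast
  define u where "u = m + min \<delta> (b - m) / 2"
  have "\<Phi> u = u" using \<delta>(1) \<open>a < m\<close> \<open>m < b\<close> by (intro fixed) (auto simp: u_def min_def field_simps)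
  moreover have "u \<noteq> m" "\<bar>u - m\<bar> < \<delta>" using \<delta>(1) \<open>m < b\<close> by (auto simp: u_def min_def)
  ultimately show False using \<delta>(2) by blast
qed

section \<open>Scalar equations with unique forward solutions\<close>

definition solution_from :: "(real \<Rightarrow> real \<Rightarrow> real) \<Rightarrow> real \<Rightarrow> (real \<Rightarrow> real) \<Rightarrow> bool" where
  "solution_from g a z \<longleftrightarrow> (\<forall>t\<ge>a. (z has_real_derivative g t (z t)) (at t within {a..}))"

definition solution_on :: "(real \<Rightarrow> real \<Rightarrow> real) \<Rightarrow> real \<Rightarrow> real \<Rightarrow> (real \<Rightarrow> real) \<Rightarrow> bool" where
  "solution_on g a b z \<longleftrightarrow> (\<forall>t\<in>{a..b}. (z has_real_derivative g t (z t)) (at t within {a..b}))"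

lemma is_solution_iff_solution_from: "is_solution g v z \<longleftrightarrow> z 0 = v \<and> solution_from g 0 z"
  unfolding is_solution_def solution_from_def by simp

lemma solution_from_later:
  assumes "solution_from g a z" and "a \<le> b"
  shows "solution_from g b z"
  unfolding solution_from_def
proof (intro allI impI)
  fix t assume "b \<le> t"
  then have "(z has_real_derivative g t (z t)) (at t within {a..})"
    using assms unfolding solution_from_def by auto
  then show "(z has_real_derivative g t (z t)) (at t within {b..})"
    by (rule has_field_derivative_subset) (use assms(2) in auto)
qed

lemma solution_on_if_solution_from:
  assumes "solution_from g a z"
  shows "solution_on g a b z"
  unfolding solution_on_def
proof
  fix t assume "t \<in> {a..b}"
  then have "(z has_real_derivative g t (z t)) (at t within {a..})"
    using assms unfolding solution_from_def by auto
  then show "(z has_real_derivative g t (z t)) (at t within {a..b})"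
    by (rule has_field_derivative_subset) auto
qed

lemma continuous_on_solution_from: "solution_from g a z \<Longrightarrow> continuous_on {a..} z"
  unfolding solution_from_def continuous_on_eq_continuous_within
  by (auto intro: DERIV_continuous)

lemma has_real_derivative_translate_within:
  assumes "(z has_real_derivative D) (at (s + c) within {a..})"
  shows "((\<lambda>s. z (s + c)) has_real_derivative D) (at s within {a - c..})"
proof -
  have "(\<lambda>s. s + c) ` {a - c..} = {a..}"
    by (auto intro: image_eqI[where x="_ - c"])
  then have "(z has_real_derivative D) (at (s + c) within (\<lambda>s. s + c) ` {a - c..})"
    using assms by simp
  from DERIV_image_chain[OF this DERIV_add[OF DERIV_ident DERIV_const[of c]]]
  show ?thesis by (simp add: o_def)
qed

lemma is_solution_shift:
  assumes "solution_from g a z"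
  shows "is_solution (shift a g) (z a) (\<lambda>s. z (s + a))"
  unfolding is_solution_def
proof (intro conjI allI impI)
  fix t :: real assume "t \<ge> 0"
  then have "(z has_real_derivative g (t + a) (z (t + a))) (at (t + a) within {a..})"
    using assms unfolding solution_from_def by auto
  from has_real_derivative_translate_within[OF this]
  show "((\<lambda>s. z (s + a)) has_real_derivative shift a g t (z (t + a))) (at t within {0..})"
    by (simp add: shift_def)
qed simp

lemma solution_from_unshift:
  assumes "is_solution (shift a g) v w"
  shows "solution_from g a (\<lambda>t. w (t - a))"
  unfolding solution_from_def
proof (intro allI impI)
  fix t :: real assume "t \<ge> a"
  then have "(w has_real_derivative shift a g (t - a) (w (t - a))) (at (t + - a) within {0..})"
    using assms unfolding is_solution_def by auto
  from has_real_derivative_translate_within[OF this]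
  show "((\<lambda>t. w (t - a)) has_real_derivative g t (w (t - a))) (at t within {a..})"
    by (simp add: shift_def)
qed

lemma solution_from_glue:
  assumes "a \<le> T" and z: "solution_on g a T z" and \<psi>: "solution_from g T \<psi>" "\<psi> T = z T"
  shows "solution_from g a (\<lambda>t. if t \<le> T then z t else \<psi> t)" (is "solution_from g a ?w")
proof -
  have left: "(?w has_real_derivative g t (?w t)) (at t within {a..T})" if "t \<in> {a..T}" for t
  proof -
    have "(z has_real_derivative g t (z t)) (at t within {a..T})"
      using z that unfolding solution_on_def by blast
    then have "(?w has_real_derivative g t (z t)) (at t within {a..T})"
      by (rule has_field_derivative_transform_within[where d=1]) (use that in auto)
    then show ?thesis using that by simp
  qed
  have right: "(?w has_real_derivative g t (?w t)) (at t within {T..})" if "T \<le> t" for t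
  proof -
    have "(\<psi> has_real_derivative g t (\<psi> t)) (at t within {T..})"
      using \<psi>(1) that unfolding solution_from_def by blast
    then have "(?w has_real_derivative g t (\<psi> t)) (at t within {T..})"
      by (rule has_field_derivative_transform_within[where d=1]) (use that \<psi>(2) in auto)
    then show ?thesis using that \<psi>(2) by auto
  qed
  show ?thesis unfolding solution_from_def
  proof (intro allI impI)
    fix t :: real assume "a \<le> t"
    consider "t < T" | "t = T" | "T < t" by linarith
    then show "(?w has_real_derivative g t (?w t)) (at t within {a..})"
    proof cases
      case 1
      have "at t within {a..} = at t within {a..T}"
        by (rule at_within_nhd[of _ "{..<T}"]) (use 1 in auto)
      then show ?thesis using left[of t] 1 \<open>a \<le> t\<close> by simp
    next
      case 3
      have "at t within {a..} = at t within {T..}"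
        by (rule at_within_nhd[of _ "{T<..}"]) (use 3 \<open>a \<le> T\<close> in auto)
      then show ?thesis using right[of t] 3 by simp
    next
      case 2
      have "{a..} = {a..T} \<union> {T..}" using \<open>a \<le> T\<close> by auto
      with left[of t] right[of t] 2 \<open>a \<le> T\<close> show ?thesis
        unfolding has_field_derivative_iff by (simp add: Lim_within_Un)
    qed
  qed
qed

lemma cont_RR_shift:
  assumes "cont_RR g" and "0 \<le> a"
  shows "cont_RR (shift a g)"
proof -
  have "continuous_on ({0..} \<times> UNIV) ((\<lambda>(t, x). g t x) \<circ> (\<lambda>(t, x). (t + a, x)))"
  proof (rule continuous_on_compose)
    show "continuous_on ({0..} \<times> UNIV) (\<lambda>(t, x). (t + a, x :: real))"
      by (simp add: split_beta) (intro continuous_intros)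
    show "continuous_on ((\<lambda>(t, x). (t + a, x)) ` ({0..} \<times> UNIV)) (\<lambda>(t, x). g t x)"
      by (rule continuous_on_subset[OF assms(1)[unfolded cont_RR_def]]) (use assms(2) in auto)
  qed
  then show ?thesis
    unfolding cont_RR_def by (simp add: shift_def o_def split_beta)
qed

lemma continuous_on_rectangle:
  "cont_RR g \<Longrightarrow> continuous_on ({0..T} \<times> {-M..M}) (\<lambda>(t, x). g t x)"
  unfolding cont_RR_def by (rule continuous_on_subset) auto

lemma cont_RR_bounded_on_rectangle:
  assumes "cont_RR g"
  obtains B where "B > 0" "\<And>s x. s \<in> {0..T} \<Longrightarrow> \<bar>x\<bar> \<le> M \<Longrightarrow> \<bar>g s x\<bar> \<le> B"
proof -
  have "compact ((\<lambda>(t, x). g t x) ` ({0..T} \<times> {-M..M}))"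
    by (rule compact_continuous_image[OF continuous_on_rectangle[OF assms]])
      (simp add: compact_Times)
  then obtain B where B: "\<forall>y \<in> (\<lambda>(t, x). g t x) ` ({0..T} \<times> {-M..M}). norm y \<le> B"
    using compact_imp_bounded bounded_iff by metis
  show thesis
  proof (rule that[of "max B 1"])
    fix s x assume "s \<in> {0..T}" "\<bar>x\<bar> \<le> M"
    then have "(s, x) \<in> {0..T} \<times> {-M..M}" by auto
    then have "norm ((\<lambda>(t, x). g t x) (s, x)) \<le> B" using B by blast
    then show "\<bar>g s x\<bar> \<le> max B 1" by simp
  qed simp
qed

lemma cont_RR_uniformly_continuous_on_rectangle:
  assumes "cont_RR g" and "\<epsilon> > 0"
  obtains d where "d > 0"
    "\<And>s x y. s \<in> {0..T} \<Longrightarrow> \<bar>x\<bar> \<le> M \<Longrightarrow> \<bar>y\<bar> \<le> M \<Longrightarrow> \<bar>x - y\<bar> < d \<Longrightarrow> \<bar>g s x - g s y\<bar> < \<epsilon>"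
proof -
  have "uniformly_continuous_on ({0..T} \<times> {-M..M}) (\<lambda>(t, x). g t x)"
    by (rule compact_uniformly_continuous[OF continuous_on_rectangle[OF assms(1)]])
      (simp add: compact_Times)
  then obtain d where d: "d > 0" "\<forall>p\<in>{0..T} \<times> {-M..M}. \<forall>q\<in>{0..T} \<times> {-M..M}.
      dist q p < d \<longrightarrow> dist ((\<lambda>(t, x). g t x) q) ((\<lambda>(t, x). g t x) p) < \<epsilon>"
    using assms(2) unfolding uniformly_continuous_on_def by blast
  show thesis
  proof (rule that[OF d(1)])
    fix s x y assume "s \<in> {0..T}" "\<bar>x\<bar> \<le> M" "\<bar>y\<bar> \<le> M" "\<bar>x - y\<bar> < d"
    moreover have "(s, x) \<in> {0..T} \<times> {-M..M}" "(s, y) \<in> {0..T} \<times> {-M..M}"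
      using \<open>s \<in> {0..T}\<close> \<open>\<bar>x\<bar> \<le> M\<close> \<open>\<bar>y\<bar> \<le> M\<close> by auto
    ultimately have "dist (g s x) (g s y) < \<epsilon>"
      using d(2)[rule_format, of "(s, y)" "(s, x)"] by (simp add: dist_Pair_Pair dist_real_def)
    then show "\<bar>g s x - g s y\<bar> < \<epsilon>" by (simp add: dist_real_def)
  qed
qed

lemma uniform_limit_vector_field_along:
  fixes z :: "nat \<Rightarrow> real \<Rightarrow> real" and g :: "nat \<Rightarrow> real \<Rightarrow> real \<Rightarrow> real"
  assumes P: "cont_RR P"
    and bound: "\<And>n s. s \<in> {0..T} \<Longrightarrow> \<bar>z n s\<bar> \<le> M"
    and conv: "\<And>e. e > 0 \<Longrightarrow> \<exists>N. \<forall>n\<ge>N. \<forall>s\<in>{0..T}. \<forall>x. \<bar>x\<bar> \<le> M \<longrightarrow> \<bar>g n s x - P s x\<bar> < e"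
    and lim: "uniform_limit {0..T} z w sequentially"
  shows "uniform_limit {0..T} (\<lambda>n s. g n s (z n s)) (\<lambda>s. P s (w s)) sequentially"
proof (rule uniform_limitI)
  fix \<epsilon> :: real assume "\<epsilon> > 0"
  then have "\<epsilon>/2 > 0" by simp
  have w_bound: "\<bar>w s\<bar> \<le> M" if "s \<in> {0..T}" for s
    by (rule LIMSEQ_le_const2[OF tendsto_rabs[OF tendsto_uniform_limitI[OF lim that]]])
      (use bound that in auto)
  obtain N where N: "\<forall>n\<ge>N. \<forall>s\<in>{0..T}. \<forall>x. \<bar>x\<bar> \<le> M \<longrightarrow> \<bar>g n s x - P s x\<bar> < \<epsilon>/2"
    using conv \<open>\<epsilon>/2 > 0\<close> by blast
  obtain d where d: "d > 0" "\<And>s x y. s \<in> {0..T} \<Longrightarrow> \<bar>x\<bar> \<le> M \<Longrightarrow> \<bar>y\<bar> \<le> M \<Longrightarrow>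
      \<bar>x - y\<bar> < d \<Longrightarrow> \<bar>P s x - P s y\<bar> < \<epsilon>/2"
    using cont_RR_uniformly_continuous_on_rectangle[where T=T and M=M, OF P \<open>\<epsilon>/2 > 0\<close>] by blast
  have "\<forall>\<^sub>F n in sequentially. \<forall>s\<in>{0..T}. \<bar>g n s (z n s) - P s (z n s)\<bar> < \<epsilon>/2"
    using N bound unfolding eventually_sequentially by blast
  moreover have "\<forall>\<^sub>F n in sequentially. \<forall>s\<in>{0..T}. dist (z n s) (w s) < d"
    by (rule uniform_limitD[OF lim d(1)])
  ultimately show "\<forall>\<^sub>F n in sequentially. \<forall>s\<in>{0..T}. dist (g n s (z n s)) (P s (w s)) < \<epsilon>"
  proof eventually_elim
    case (elim n)
    show ?case
    proof
      fix s assume s: "s \<in> {0..T}"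
      have "\<bar>P s (z n s) - P s (w s)\<bar> < \<epsilon>/2"
        using d(2)[OF s bound[OF s] w_bound[OF s]] elim(2) s by (simp add: dist_real_def)
      moreover have "\<bar>g n s (z n s) - P s (z n s)\<bar> < \<epsilon>/2" using elim(1) s by blast
      ultimately have "\<bar>g n s (z n s) - P s (w s)\<bar> < \<epsilon>" by linarith
      then show "dist (g n s (z n s)) (P s (w s)) < \<epsilon>" by (simp add: dist_real_def)
    qed
  qed
qed

lemma solution_on_uniform_limit:
  fixes z :: "nat \<Rightarrow> real \<Rightarrow> real" and g :: "nat \<Rightarrow> real \<Rightarrow> real \<Rightarrow> real"
  assumes P: "cont_RR P" and "0 \<le> T"
    and sol: "\<And>n. solution_on (g n) 0 T (z n)"
    and bound: "\<And>n s. s \<in> {0..T} \<Longrightarrow> \<bar>z n s\<bar> \<le> M"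
    and conv: "\<And>e. e > 0 \<Longrightarrow> \<exists>N. \<forall>n\<ge>N. \<forall>s\<in>{0..T}. \<forall>x. \<bar>x\<bar> \<le> M \<longrightarrow> \<bar>g n s x - P s x\<bar> < e"
    and lim: "uniform_limit {0..T} z w sequentially"
  shows "solution_on P 0 T w"
proof -
  have pointwise: "(\<lambda>n. z n s) \<longlonglongrightarrow> w s" if "s \<in> {0..T}" for s
    by (rule tendsto_uniform_limitI[OF lim that])
  have field_conv: "uniform_limit {0..T} (\<lambda>n s. g n s (z n s)) (\<lambda>s. P s (w s)) sequentially"
    using P bound conv lim by (rule uniform_limit_vector_field_along)
  have derivative_conv: "\<forall>\<^sub>F n in sequentially. \<forall>s\<in>{0..T}. \<forall>h.
      norm (g n s (z n s) * h - P s (w s) * h) \<le> \<epsilon> * norm h" if "\<epsilon> > 0" for \<epsilon>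
    using uniform_limitD[OF field_conv that]
  proof eventually_elim
    case (elim n)
    show ?case
    proof (intro ballI allI)
      fix s h assume "s \<in> {0..T}"
      then have "\<bar>g n s (z n s) - P s (w s)\<bar> \<le> \<epsilon>"
        using elim by (simp add: dist_real_def less_imp_le)
      then have "\<bar>g n s (z n s) - P s (w s)\<bar> * \<bar>h\<bar> \<le> \<epsilon> * \<bar>h\<bar>"
        by (rule mult_right_mono) simp
      then show "norm (g n s (z n s) * h - P s (w s) * h) \<le> \<epsilon> * norm h"
        by (simp add: abs_mult[symmetric] left_diff_distrib)
    qed
  qed
  have "((\<lambda>s. z n s) has_derivative (\<lambda>h. g n s (z n s) * h)) (at s within {0..T})"
    if "s \<in> {0..T}" for n s
    using sol[of n] that unfolding solution_on_def has_field_derivative_def by blast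
  then obtain w' where w': "\<forall>s\<in>{0..T}. (\<lambda>n. z n s) \<longlonglongrightarrow> w' s \<and>
      (w' has_derivative (\<lambda>h. P s (w s) * h)) (at s within {0..T})"
    using has_derivative_sequence[of "{0..T}" z "\<lambda>n s h. g n s (z n s) * h" "\<lambda>s h. P s (w s) * h" 0 "w 0",
        OF convex_real_interval(5) _ derivative_conv _ pointwise] \<open>0 \<le> T\<close> by auto
  have w'_eq: "w' s = w s" if "s \<in> {0..T}" for s
    using w' pointwise that LIMSEQ_unique by blast
  show ?thesis
    unfolding solution_on_def
  proof
    fix s assume s: "s \<in> {0..T}"
    have "(w' has_real_derivative P s (w s)) (at s within {0..T})"
      using w' s unfolding has_field_derivative_def by blast
    then show "(w has_real_derivative P s (w s)) (at s within {0..T})"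
      by (rule has_field_derivative_transform_within[where d=1]) (use s w'_eq in auto)
  qed
qed

lemma solution_on_lipschitz:
  assumes "solution_on h 0 T z" and "\<And>s. s \<in> {0..T} \<Longrightarrow> \<bar>h s (z s)\<bar> \<le> L"
    and "s \<in> {0..T}" "s' \<in> {0..T}"
  shows "\<bar>z s - z s'\<bar> \<le> L * \<bar>s - s'\<bar>"
proof -
  have "norm (z s - z s') \<le> L * norm (s - s')"
    by (rule field_differentiable_bound[where f'="\<lambda>x. h x (z x)" and S="{0..T}"])
      (use assms in \<open>auto simp: solution_on_def\<close>)
  then show ?thesis by simp
qed

text \<open>Arzela-Ascoli: the approximate solutions are eventually equi-Lipschitz.\<close>
lemma approximate_solutions_convergent_subseq:
  fixes z :: "nat \<Rightarrow> real \<Rightarrow> real" and g :: "nat \<Rightarrow> real \<Rightarrow> real \<Rightarrow> real"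
  assumes P: "cont_RR P" and "0 \<le> T"
    and sol: "\<And>n. solution_on (g n) 0 T (z n)"
    and bound: "\<And>n s. s \<in> {0..T} \<Longrightarrow> \<bar>z n s\<bar> \<le> M"
    and conv: "\<And>e. e > 0 \<Longrightarrow> \<exists>N. \<forall>n\<ge>N. \<forall>s\<in>{0..T}. \<forall>x. \<bar>x\<bar> \<le> M \<longrightarrow> \<bar>g n s x - P s x\<bar> < e"
  obtains k w where "strict_mono k" "uniform_limit {0..T} (\<lambda>n. z (k n)) w sequentially"
    "solution_on P 0 T w"
proof -
  obtain N where N: "\<forall>n\<ge>N. \<forall>s\<in>{0..T}. \<forall>x. \<bar>x\<bar> \<le> M \<longrightarrow> \<bar>g n s x - P s x\<bar> < 1"
    using conv[of 1] by auto
  obtain B where B: "B > 0" "\<And>s x. s \<in> {0..T} \<Longrightarrow> \<bar>x\<bar> \<le> M \<Longrightarrow> \<bar>P s x\<bar> \<le> B"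
    using cont_RR_bounded_on_rectangle[where T=T and M=M, OF P] by blast
  define F where "F n = z (n + N)" for n
  have lipschitz: "\<bar>F n s - F n s'\<bar> \<le> (B + 1) * \<bar>s - s'\<bar>" if "s \<in> {0..T}" "s' \<in> {0..T}" for n s s'
    unfolding F_def
  proof (rule solution_on_lipschitz[where h="g (n + N)" and z="z (n + N)" and L="B + 1"])
    show "solution_on (g (n + N)) 0 T (z (n + N))" by (rule sol)
    fix x assume x: "x \<in> {0..T}"
    have "\<bar>g (n + N) x (z (n + N) x) - P x (z (n + N) x)\<bar> < 1" "\<bar>P x (z (n + N) x)\<bar> \<le> B"
      using N B(2) x bound[OF x] by simp_all
    then show "\<bar>g (n + N) x (z (n + N) x)\<bar> \<le> B + 1" by simp
  qed (use that in auto)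
  have equicontinuous: "\<exists>d>0. \<forall>n y. y \<in> {0..T} \<and> norm (x - y) < d \<longrightarrow> norm (F n x - F n y) < \<epsilon>"
    if "x \<in> {0..T}" "\<epsilon> > 0" for x \<epsilon>
  proof (intro exI[of _ "\<epsilon> / (B + 1)"] conjI allI impI)
    show "0 < \<epsilon> / (B + 1)" using B that by simp
    fix n y assume y: "y \<in> {0..T} \<and> norm (x - y) < \<epsilon> / (B + 1)"
    have "\<bar>F n x - F n y\<bar> \<le> (B + 1) * \<bar>x - y\<bar>" using lipschitz that y by blast
    also have "\<dots> < \<epsilon>" using y B by (simp add: field_simps)
    finally show "norm (F n x - F n y) < \<epsilon>" by simp
  qed
  have F_bound: "norm (F n s) \<le> M" if "s \<in> {0..T}" for n s using bound that by (simp add: F_def)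
  obtain w k where "continuous_on {0..T} w" and w: "strict_mono (k :: nat \<Rightarrow> nat)"
      "\<And>e. 0 < e \<Longrightarrow> \<exists>N. \<forall>n x. n \<ge> N \<and> x \<in> {0..T} \<longrightarrow> norm (F (k n) x - w x) < e"
    using Arzela_Ascoli[OF compact_Icc F_bound equicontinuous] by blast
  define k' where "k' n = k n + N" for n
  have "strict_mono k'" using w(1) by (simp add: strict_mono_def k'_def)
  moreover have lim: "uniform_limit {0..T} (\<lambda>n. z (k' n)) w sequentially"
    unfolding uniform_limit_sequentially_iff
  proof (intro allI impI)
    fix e :: real assume "e > 0"
    then obtain N' where "\<forall>n x. n \<ge> N' \<and> x \<in> {0..T} \<longrightarrow> norm (F (k n) x - w x) < e"
      using w(2) by blast
    then show "\<exists>N. \<forall>n\<ge>N. \<forall>x\<in>{0..T}. dist (z (k' n) x) (w x) < e"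
      by (auto simp: F_def k'_def dist_norm intro!: exI[of _ N'])
  qed
  moreover have "solution_on P 0 T w"
  proof (rule solution_on_uniform_limit[OF P \<open>0 \<le> T\<close> sol bound _ lim])
    fix e :: real assume "e > 0"
    then obtain N' where "\<forall>n\<ge>N'. \<forall>s\<in>{0..T}. \<forall>x. \<bar>x\<bar> \<le> M \<longrightarrow> \<bar>g n s x - P s x\<bar> < e"
      using conv by blast
    moreover have "N' \<le> k' n" if "N' \<le> n" for n
      using seq_suble[OF \<open>strict_mono k'\<close>, of n] that by simp
    ultimately show "\<exists>N. \<forall>n\<ge>N. \<forall>s\<in>{0..T}. \<forall>x. \<bar>x\<bar> \<le> M \<longrightarrow> \<bar>g (k' n) s x - P s x\<bar> < e"
      by blast
  qed
  ultimately show thesis using that by blast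
qed

locale unique_forward_flow =
  fixes g :: "real \<Rightarrow> real \<Rightarrow> real"
  assumes continuous: "cont_RR g"
    and solution_exists: "\<And>a v. 0 \<le> a \<Longrightarrow> \<exists>z. solution_from g a z \<and> z a = v"
    and solution_unique: "\<And>a z1 z2 t. 0 \<le> a \<Longrightarrow> solution_from g a z1 \<Longrightarrow> solution_from g a z2 \<Longrightarrow>
        z1 a = z2 a \<Longrightarrow> a \<le> t \<Longrightarrow> z1 t = z2 t"
begin

definition flow :: "real \<Rightarrow> real \<Rightarrow> real" where
  "flow v = (SOME z. is_solution g v z)"

lemma is_solution_flow: "is_solution g v (flow v)"
proof -
  obtain z where "solution_from g 0 z" "z 0 = v" using solution_exists[of 0 v] by auto
  then have "\<exists>z. is_solution g v z" by (auto simp: is_solution_iff_solution_from)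
  then show ?thesis unfolding flow_def by (rule someI_ex)
qed

lemma flow_0 [simp]: "flow v 0 = v"
  and solution_from_flow: "solution_from g 0 (flow v)"
  using is_solution_flow[of v] by (auto simp: is_solution_iff_solution_from)

lemma flow_unique: "is_solution g v z \<Longrightarrow> 0 \<le> t \<Longrightarrow> z t = flow v t"
  using solution_unique[of 0 z "flow v" t] solution_from_flow
  by (auto simp: is_solution_iff_solution_from)

lemma continuous_on_flow: "continuous_on {0..} (flow v)"
  by (rule continuous_on_solution_from[OF solution_from_flow])

text \<open>Two solutions that meet coincide from then on, so the flow of a scalar equation
  preserves order.\<close>
lemma flow_mono:
  assumes "v \<le> v'" and "0 \<le> t"
  shows "flow v t \<le> flow v' t"
proof (rule ccontr)
  assume "\<not> ?thesis"
  then have neg: "flow v' t - flow v t < 0" by simp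
  have "continuous_on {0..t} (\<lambda>s. flow v' s - flow v s)"
    by (intro continuous_on_diff continuous_on_subset[OF continuous_on_flow]) auto
  then obtain t0 where t0: "0 \<le> t0" "t0 \<le> t" "flow v' t0 - flow v t0 = 0"
    using IVT2'[of "\<lambda>s. flow v' s - flow v s" t 0 0] neg assms by auto
  have "flow v' t = flow v t"
    by (rule solution_unique[of t0]) (use t0 solution_from_later[OF solution_from_flow] in auto)
  with neg show False by simp
qed

lemma solution_on_eq_flow:
  assumes "0 \<le> T" and z: "solution_on g 0 T z" and "s \<in> {0..T}"
  shows "z s = flow (z 0) s"
proof -
  obtain \<psi> where \<psi>: "solution_from g T \<psi>" "\<psi> T = z T"
    using solution_exists[OF \<open>0 \<le> T\<close>] by blast
  let ?w = "\<lambda>t. if t \<le> T then z t else \<psi> t"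
  have "is_solution g (z 0) ?w"
    using solution_from_glue[OF \<open>0 \<le> T\<close> z \<psi>] \<open>0 \<le> T\<close>
    by (simp add: is_solution_iff_solution_from)
  from flow_unique[OF this, of s] show ?thesis using \<open>s \<in> {0..T}\<close> by simp
qed

lemma flow_bounded_on:
  obtains B where "\<And>v s. \<bar>v\<bar> \<le> M \<Longrightarrow> s \<in> {0..T} \<Longrightarrow> \<bar>flow v s\<bar> \<le> B"
proof -
  have "bounded (flow u ` {0..T})" for u
    by (intro compact_imp_bounded compact_continuous_image compact_Icc
        continuous_on_subset[OF continuous_on_flow]) auto
  then obtain A1 A2 where A1: "\<forall>y\<in>flow M ` {0..T}. norm y \<le> A1"
    and A2: "\<forall>y\<in>flow (-M) ` {0..T}. norm y \<le> A2"
    unfolding bounded_iff by meson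
  show thesis
  proof (rule that[of "max A1 A2"])
    fix v s assume "\<bar>v\<bar> \<le> M" "s \<in> {0..T}"
    then have "flow (-M) s \<le> flow v s" "flow v s \<le> flow M s"
      by (auto intro: flow_mono)
    moreover have "\<bar>flow M s\<bar> \<le> A1" "\<bar>flow (-M) s\<bar> \<le> A2"
      using A1 A2 \<open>s \<in> {0..T}\<close> by auto
    ultimately show "\<bar>flow v s\<bar> \<le> max A1 A2" by linarith
  qed
qed

text \<open>Kamke's convergence theorem: by compactness every subsequence has a further
  subsequence converging to a solution of \<open>x' = g(t, x)\<close>, which by uniqueness is the flow.\<close>
lemma uniform_limit_approximate_solutions:
  fixes z :: "nat \<Rightarrow> real \<Rightarrow> real" and h :: "nat \<Rightarrow> real \<Rightarrow> real \<Rightarrow> real"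
  assumes "0 \<le> T"
    and sol: "\<And>n. solution_on (h n) 0 T (z n)"
    and bound: "\<And>n s. s \<in> {0..T} \<Longrightarrow> \<bar>z n s\<bar> \<le> M"
    and conv: "\<And>e. e > 0 \<Longrightarrow> \<exists>N. \<forall>n\<ge>N. \<forall>s\<in>{0..T}. \<forall>x. \<bar>x\<bar> \<le> M \<longrightarrow> \<bar>h n s x - g s x\<bar> < e"
    and init: "(\<lambda>n. z n 0) \<longlonglongrightarrow> v"
  shows "uniform_limit {0..T} z (flow v) sequentially"
proof (rule ccontr)
  assume "\<not> ?thesis"
  then obtain e where "e > 0" and
    not_eventually: "\<not> (\<forall>\<^sub>F n in sequentially. \<forall>s\<in>{0..T}. dist (z n s) (flow v s) < e)"
    unfolding uniform_limit_iff by blast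
  obtain r where r: "strict_mono (r :: nat \<Rightarrow> nat)" "\<And>n. \<not> (\<forall>s\<in>{0..T}. dist (z (r n) s) (flow v s) < e)"
    using not_eventually_sequentiallyD[OF not_eventually] by blast
  have conv_r: "\<exists>N. \<forall>n\<ge>N. \<forall>s\<in>{0..T}. \<forall>x. \<bar>x\<bar> \<le> M \<longrightarrow> \<bar>h (r n) s x - g s x\<bar> < e'"
    if e': "e' > 0" for e'
  proof -
    obtain N where "\<forall>n\<ge>N. \<forall>s\<in>{0..T}. \<forall>x. \<bar>x\<bar> \<le> M \<longrightarrow> \<bar>h n s x - g s x\<bar> < e'"
      using conv[OF e'] by blast
    moreover have "N \<le> r n" if "N \<le> n" for n using seq_suble[OF r(1), of n] that by simp
    ultimately show ?thesis by blast
  qed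
  obtain k w where k: "strict_mono k" "uniform_limit {0..T} (\<lambda>n. z (r (k n))) w sequentially"
    and w: "solution_on g 0 T w"
    using approximate_solutions_convergent_subseq[OF continuous \<open>0 \<le> T\<close> sol bound conv_r]
    by blast
  have "(\<lambda>n. z (r (k n)) 0) \<longlonglongrightarrow> v"
    using LIMSEQ_subseq_LIMSEQ[OF init strict_mono_o[OF r(1) k(1)]] by (simp add: o_def)
  moreover have "(\<lambda>n. z (r (k n)) 0) \<longlonglongrightarrow> w 0"
    using tendsto_uniform_limitI[OF k(2)] \<open>0 \<le> T\<close> by simp
  ultimately have "w 0 = v" using LIMSEQ_unique by metis
  then have "uniform_limit {0..T} (\<lambda>n. z (r (k n))) w sequentially \<longleftrightarrow>
      uniform_limit {0..T} (\<lambda>n. z (r (k n))) (flow v) sequentially"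
    by (intro uniform_limit_cong') (use solution_on_eq_flow[OF \<open>0 \<le> T\<close> w] in auto)
  with k(2) have "uniform_limit {0..T} (\<lambda>n. z (r (k n))) (flow v) sequentially" by simp
  then have "\<forall>\<^sub>F n in sequentially. \<forall>s\<in>{0..T}. dist (z (r (k n)) s) (flow v s) < e"
    using \<open>e > 0\<close> by (rule uniform_limitD)
  then obtain N where "\<forall>s\<in>{0..T}. dist (z (r (k N)) s) (flow v s) < e"
    unfolding eventually_sequentially by blast
  with r(2) show False by blast
qed

lemma uniform_limit_flow:
  assumes "0 \<le> T" and "v \<longlonglongrightarrow> w"
  shows "uniform_limit {0..T} (\<lambda>n. flow (v n)) (flow w) sequentially"
proof -
  obtain M where M: "\<And>n. \<bar>v n\<bar> \<le> M"
    using BseqE[OF convergent_imp_Bseq[OF convergentI[OF assms(2)]]] by (metis real_norm_def)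
  obtain B where B: "\<And>v s. \<bar>v\<bar> \<le> M \<Longrightarrow> s \<in> {0..T} \<Longrightarrow> \<bar>flow v s\<bar> \<le> B"
    using flow_bounded_on[where M=M and T=T] by blast
  show ?thesis
  proof (rule uniform_limit_approximate_solutions[where h="\<lambda>_. g" and M=B])
    show "solution_on g 0 T (flow (v n))" for n
      by (rule solution_on_if_solution_from[OF solution_from_flow])
    show "\<bar>flow (v n) s\<bar> \<le> B" if "s \<in> {0..T}" for n s
      using B[OF M that] .
  qed (use assms in auto)
qed

end

section \<open>Asymptotically periodic equations\<close>

lemma tendsto_zero_if_uniform_limit_on_periods:
  fixes u :: "real \<Rightarrow> real"
  assumes "0 < \<tau>" and lim: "uniform_limit {0..\<tau>} (\<lambda>n s. u (s + real n * \<tau>)) (\<lambda>_. 0) sequentially"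
  shows "(u \<longlongrightarrow> 0) at_top"
  unfolding tendsto_iff eventually_at_top_linorder
proof (intro allI impI)
  fix e :: real assume "0 < e"
  then obtain N where N: "\<forall>n\<ge>N. \<forall>s\<in>{0..\<tau>}. dist (u (s + real n * \<tau>)) 0 < e"
    using lim unfolding uniform_limit_sequentially_iff by blast
  have "dist (u t) 0 < e" if t: "real N * \<tau> \<le> t" for t
  proof -
    define n where "n = nat \<lfloor>t / \<tau>\<rfloor>"
    have "real N \<le> t / \<tau>" using t \<open>0 < \<tau>\<close> by (simp add: field_simps)
    then have "int N \<le> \<lfloor>t / \<tau>\<rfloor>" by (simp add: le_floor_iff)
    then have "N \<le> n" and "real n = real_of_int \<lfloor>t / \<tau>\<rfloor>" by (auto simp: n_def)
    then have "real n \<le> t / \<tau>" "t / \<tau> < real n + 1" by linarith+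
    then have "t - real n * \<tau> \<in> {0..\<tau>}" using \<open>0 < \<tau>\<close> by (auto simp: field_simps)
    with N \<open>N \<le> n\<close> show ?thesis by fastforce
  qed
  then show "\<exists>T. \<forall>t\<ge>T. dist (u t) 0 < e" by blast
qed

locale asymptotically_periodic_equation =
  fixes \<tau> :: real and f P R :: "real \<Rightarrow> real \<Rightarrow> real"
  assumes period_pos: "0 < \<tau>" and regular: "regular f"
    and decomposition: "asympt_periodic_decomp \<tau> f P R"
begin

lemma f_eq: "0 \<le> t \<Longrightarrow> f t x = P t x + R t x"
  using decomposition unfolding asympt_periodic_decomp_def by blast

lemma remainder_vanishes: "compact K \<Longrightarrow> 0 < e \<Longrightarrow> \<exists>T. \<forall>t\<ge>T. \<forall>x\<in>K. \<bar>R t x\<bar> < e"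
  using decomposition unfolding asympt_periodic_decomp_def by blast

lemma cont_RR_P: "cont_RR P"
  using decomposition unfolding asympt_periodic_decomp_def by blast

lemma P_periodic: "0 \<le> t \<Longrightarrow> P (t + real n * \<tau>) x = P t x"
proof (induction n)
  case (Suc n)
  have "P (t + real (Suc n) * \<tau>) x = P ((t + real n * \<tau>) + \<tau>) x"
    by (simp add: algebra_simps)
  also have "\<dots> = P (t + real n * \<tau>) x"
    using decomposition Suc.prems period_pos unfolding asympt_periodic_decomp_def by simp
  finally show ?case using Suc by simp
qed simp

lemma shift_f_minus_shift_P:
  assumes "0 \<le> t" and "0 \<le> c"
  shows "shift (c + real n * \<tau>) f t x - shift c P t x = R (t + c + real n * \<tau>) x"
  using f_eq[of "t + (c + real n * \<tau>)" x] P_periodic[of "t + c" n x] assms period_pos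
  by (simp add: shift_def add.assoc)

lemma shift_P_in_hull:
  assumes "0 \<le> a"
  shows "shift a P \<in> hull_H f"
proof -
  have "\<exists>h\<ge>0. \<forall>(t, x)\<in>K. \<bar>shift h f t x - shift a P t x\<bar> < e"
    if K: "compact K" "K \<subseteq> {0..} \<times> UNIV" and "0 < e" for K e
  proof -
    have "compact (snd ` K)"
      by (rule compact_continuous_image[OF continuous_on_snd[OF continuous_on_id] K(1)])
    then obtain T where T: "\<forall>t\<ge>T. \<forall>x\<in>snd ` K. \<bar>R t x\<bar> < e"
      using remainder_vanishes \<open>0 < e\<close> by blast
    obtain n where n: "max T 0 < real n * \<tau>"
      using ex_less_of_nat_mult[OF period_pos] by blast
    show ?thesis
    proof (intro exI[of _ "a + real n * \<tau>"] conjI ballI)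
      show "0 \<le> a + real n * \<tau>" using assms n by simp
      fix z assume "z \<in> K"
      then obtain t x where z: "z = (t, x)" "0 \<le> t" "x \<in> snd ` K"
        using K(2) by (cases z) force
      moreover have "T \<le> t + a + real n * \<tau>" using n z(2) assms by linarith
      ultimately have "\<bar>R (t + a + real n * \<tau>) x\<bar> < e" using T by blast
      then show "case z of (t, x) \<Rightarrow> \<bar>shift (a + real n * \<tau>) f t x - shift a P t x\<bar> < e"
        using shift_f_minus_shift_P[OF z(2) assms] z(1) by simp
    qed
  qed
  with cont_RR_shift[OF cont_RR_P assms] show ?thesis unfolding hull_H_def by blast
qed

sublocale unique_forward_flow P
proof
  show "cont_RR P" by (fact cont_RR_P)
next
  fix a v :: real assume "0 \<le> a"
  then obtain w where "is_solution (shift a P) v w"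
    using regular shift_P_in_hull unfolding regular_def by blast
  then have "solution_from P a (\<lambda>t. w (t - a))" and "w (a - a) = v"
    by (auto simp: solution_from_unshift is_solution_def)
  then show "\<exists>z. solution_from P a z \<and> z a = v" by blast
next
  fix a z1 z2 t assume "0 \<le> a" "solution_from P a z1" "solution_from P a z2" "z1 a = z2 a" "a \<le> t"
  then have "is_solution (shift a P) (z1 a) (\<lambda>s. z1 (s + a))" "is_solution (shift a P) (z1 a) (\<lambda>s. z2 (s + a))"
    using is_solution_shift by metis+
  moreover obtain w where "\<forall>z. is_solution (shift a P) (z1 a) z \<longrightarrow> (\<forall>s\<ge>0. z s = w s)"
    using regular shift_P_in_hull[OF \<open>0 \<le> a\<close>] unfolding regular_def by blast
  ultimately show "z1 t = z2 t"
    using \<open>a \<le> t\<close> by (metis diff_add_cancel diff_ge_0_iff_ge)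
qed

lemma flow_periodic:
  assumes "flow w \<tau> = w" and "0 \<le> t"
  shows "flow w (t + real n * \<tau>) = flow w t"
proof -
  have one_period: "flow w (s + \<tau>) = flow w s" if "0 \<le> s" for s
  proof -
    have "is_solution (shift \<tau> P) (flow w \<tau>) (\<lambda>s. flow w (s + \<tau>))"
      using is_solution_shift[OF solution_from_later[OF solution_from_flow, of \<tau>]] period_pos
      by simp
    moreover have "shift \<tau> P s x = P s x" if "0 \<le> s" for s x
      using P_periodic[OF that, of 1] by (simp add: shift_def)
    ultimately have "is_solution P w (\<lambda>s. flow w (s + \<tau>))"
      using assms(1) unfolding is_solution_def by simp
    from flow_unique[OF this that] show ?thesis .
  qed
  show ?thesis
  proof (induction n)
    case (Suc n)
    have "flow w (t + real (Suc n) * \<tau>) = flow w ((t + real n * \<tau>) + \<tau>)"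
      by (simp add: algebra_simps)
    also have "\<dots> = flow w (t + real n * \<tau>)"
      using one_period assms(2) period_pos by simp
    finally show ?case using Suc by simp
  qed simp
qed

lemma shift_f_converges:
  assumes "\<And>n. n \<le> m n" and "0 < e"
  shows "\<exists>N. \<forall>n\<ge>N. \<forall>s\<in>{0..\<tau>}. \<forall>x. \<bar>x\<bar> \<le> M \<longrightarrow>
    \<bar>shift (real (m n) * \<tau>) f s x - P s x\<bar> < e"
proof -
  obtain T where T: "\<forall>t\<ge>T. \<forall>x\<in>{-M..M}. \<bar>R t x\<bar> < e"
    using remainder_vanishes[OF compact_Icc \<open>0 < e\<close>] by blast
  obtain N where N: "T < real N * \<tau>"
    using ex_less_of_nat_mult[OF period_pos] by blast
  have "\<bar>shift (real (m n) * \<tau>) f s x - P s x\<bar> < e"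
    if "N \<le> n" "s \<in> {0..\<tau>}" "\<bar>x\<bar> \<le> M" for n s x
  proof -
    have "real N * \<tau> \<le> real (m n) * \<tau>"
      using assms(1)[of n] \<open>N \<le> n\<close> period_pos by (intro mult_right_mono) auto
    then have "T \<le> s + real (m n) * \<tau>" using N that(2) by auto
    moreover have "x \<in> {-M..M}" using that(3) by (auto simp: abs_le_iff)
    ultimately have "\<bar>R (s + real (m n) * \<tau>) x\<bar> < e" using T by blast
    then show ?thesis
      using shift_f_minus_shift_P[of s 0 "m n" x] that(2) by (simp add: shift_def)
  qed
  then show ?thesis by blast
qed

end

locale asymptotically_periodic_bounded_solution = asymptotically_periodic_equation +
  fixes u0 :: real and y :: "real \<Rightarrow> real"
  assumes solution: "is_solution f u0 y" and bounded: "bounded (y ` {0..})"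
begin

lemma solution_bound:
  obtains M where "\<And>t. 0 \<le> t \<Longrightarrow> \<bar>y t\<bar> \<le> M"
  using bounded unfolding bounded_iff by fastforce

lemma solution_on_segment:
  "solution_on (shift (real n * \<tau>) f) 0 \<tau> (\<lambda>s. y (s + real n * \<tau>))"
proof -
  have "solution_from f (real n * \<tau>) y"
    using solution period_pos by (auto simp: is_solution_iff_solution_from intro: solution_from_later)
  from is_solution_shift[OF this] show ?thesis
    by (auto simp: is_solution_iff_solution_from intro: solution_on_if_solution_from)
qed

text \<open>Along a subsequence with convergent initial values \<open>y(n\<tau>) \<rightarrow> v\<close>, both the segments
  (by Kamke's theorem) and the flows from their initial values (by continuous dependence)
  converge uniformly to the flow from \<open>v\<close>.\<close>
lemma segments_track_flow:
  "uniform_limit {0..\<tau>} (\<lambda>n s. y (s + real n * \<tau>) - flow (y (real n * \<tau>)) s) (\<lambda>_. 0) sequentially"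
proof (rule ccontr)
  assume "\<not> ?thesis"
  then obtain e where "0 < e" and not_eventually:
    "\<not> (\<forall>\<^sub>F n in sequentially. \<forall>s\<in>{0..\<tau>}. dist (y (s + real n * \<tau>) - flow (y (real n * \<tau>)) s) 0 < e)"
    unfolding uniform_limit_iff by blast
  obtain r where r: "strict_mono (r :: nat \<Rightarrow> nat)"
    "\<And>n. \<not> (\<forall>s\<in>{0..\<tau>}. dist (y (s + real (r n) * \<tau>) - flow (y (real (r n) * \<tau>)) s) 0 < e)"
    using not_eventually_sequentiallyD[OF not_eventually] by blast
  obtain M where M: "\<And>t. 0 \<le> t \<Longrightarrow> \<bar>y t\<bar> \<le> M" using solution_bound by blast
  have "bounded (range (\<lambda>n. y (real (r n) * \<tau>)))"
    unfolding bounded_iff using M period_pos by (auto intro!: exI[of _ M])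
  then obtain q v where q: "strict_mono (q :: nat \<Rightarrow> nat)"
    and v: "((\<lambda>n. y (real (r n) * \<tau>)) \<circ> q) \<longlonglongrightarrow> v"
    using bounded_imp_convergent_subsequence by blast
  define m where "m = r \<circ> q"
  have "strict_mono m" unfolding m_def by (rule strict_mono_o[OF r(1) q])
  then have "n \<le> m n" for n by (rule seq_suble)
  have samples: "(\<lambda>n. y (real (m n) * \<tau>)) \<longlonglongrightarrow> v" using v by (simp add: m_def o_def)
  have "uniform_limit {0..\<tau>} (\<lambda>n s. y (s + real (m n) * \<tau>)) (flow v) sequentially"
  proof (rule uniform_limit_approximate_solutions)
    show "solution_on (shift (real (m n) * \<tau>) f) 0 \<tau> (\<lambda>s. y (s + real (m n) * \<tau>))" for n
      by (rule solution_on_segment)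
    show "\<bar>y (s + real (m n) * \<tau>)\<bar> \<le> M" if "s \<in> {0..\<tau>}" for n s
      using M that period_pos by simp
    show "\<exists>N. \<forall>n\<ge>N. \<forall>s\<in>{0..\<tau>}. \<forall>x. \<bar>x\<bar> \<le> M \<longrightarrow> \<bar>shift (real (m n) * \<tau>) f s x - P s x\<bar> < e'"
      if "0 < e'" for e'
      by (rule shift_f_converges[OF \<open>\<And>n. n \<le> m n\<close> that])
  qed (use samples period_pos in simp_all)
  moreover have "uniform_limit {0..\<tau>} (\<lambda>n. flow (y (real (m n) * \<tau>))) (flow v) sequentially"
    using uniform_limit_flow[OF _ samples] period_pos by simp
  ultimately have "uniform_limit {0..\<tau>}
      (\<lambda>n s. y (s + real (m n) * \<tau>) - flow (y (real (m n) * \<tau>)) s) (\<lambda>s. flow v s - flow v s) sequentially"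
    by (rule uniform_limit_minus)
  then have "uniform_limit {0..\<tau>}
      (\<lambda>n s. y (s + real (m n) * \<tau>) - flow (y (real (m n) * \<tau>)) s) (\<lambda>_. 0) sequentially"
    by simp
  from uniform_limitD[OF this \<open>0 < e\<close>] obtain N where "\<forall>s\<in>{0..\<tau>}. dist (y (s + real (m N) * \<tau>) - flow (y (real (m N) * \<tau>)) s) 0 < e"
    unfolding eventually_sequentially by blast
  with r(2)[of "q N"] show False by (simp add: m_def)
qed

lemma samples_recursion:
  "(\<lambda>n. y (real (Suc n) * \<tau>) - flow (y (real n * \<tau>)) \<tau>) \<longlonglongrightarrow> 0"
proof -
  have "(\<lambda>n. y (\<tau> + real n * \<tau>) - flow (y (real n * \<tau>)) \<tau>) \<longlonglongrightarrow> 0"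
    using tendsto_uniform_limitI[OF segments_track_flow, of \<tau>] period_pos by simp
  then show ?thesis by (simp add: algebra_simps)
qed

lemma samples_convergent:
  assumes "periodic_solutions_isolated \<tau> P"
  shows "convergent (\<lambda>n. y (real n * \<tau>))"
proof (rule monotone_recursion_convergent[where \<Phi>="\<lambda>u. flow u \<tau>"])
  show "mono (\<lambda>u. flow u \<tau>)" using flow_mono period_pos by (auto intro: monoI)
  show "(\<lambda>n. y (real (Suc n) * \<tau>) - flow (y (real n * \<tau>)) \<tau>) \<longlonglongrightarrow> 0"
    by (rule samples_recursion)
  obtain M where "\<And>t. 0 \<le> t \<Longrightarrow> \<bar>y t\<bar> \<le> M" using solution_bound by blast
  then show "bounded (range (\<lambda>n. y (real n * \<tau>)))"
    unfolding bounded_iff using period_pos by (auto intro!: exI[of _ M])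
  fix w assume "flow w \<tau> = w"
  then obtain \<delta> where "\<delta> > 0"
    and \<delta>: "\<forall>u z. u \<noteq> w \<and> \<bar>u - w\<bar> < \<delta> \<and> is_solution P u z \<longrightarrow> z \<tau> \<noteq> u"
    using assms is_solution_flow[of w] unfolding periodic_solutions_isolated_def by blast
  show "\<exists>\<delta>>0. \<forall>u. u \<noteq> w \<and> \<bar>u - w\<bar> < \<delta> \<longrightarrow> flow u \<tau> \<noteq> u"
  proof (intro exI[of _ \<delta>] conjI allI impI)
    fix u assume "u \<noteq> w \<and> \<bar>u - w\<bar> < \<delta>"
    with \<delta> is_solution_flow[of u] show "flow u \<tau> \<noteq> u" by blast
  qed (fact \<open>\<delta> > 0\<close>)
qed

lemma sample_limit_periodic:
  assumes "(\<lambda>n. y (real n * \<tau>)) \<longlonglongrightarrow> w"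
  shows "flow w \<tau> = w"
proof -
  have "(\<lambda>n. flow (y (real n * \<tau>)) \<tau>) \<longlonglongrightarrow> flow w \<tau>"
    using tendsto_uniform_limitI[OF uniform_limit_flow[OF _ assms], of \<tau> \<tau>] period_pos by simp
  moreover have "(\<lambda>n. y (real (Suc n) * \<tau>) - (y (real (Suc n) * \<tau>) - flow (y (real n * \<tau>)) \<tau>))
      \<longlonglongrightarrow> w - 0"
    using LIMSEQ_Suc[OF assms] samples_recursion by (rule tendsto_diff)
  then have "(\<lambda>n. flow (y (real n * \<tau>)) \<tau>) \<longlonglongrightarrow> w" by simp
  ultimately show ?thesis by (rule LIMSEQ_unique)
qed

theorem asymptotically_periodic:
  assumes "periodic_solutions_isolated \<tau> P"
  shows "\<exists>p. continuous_on {0..} p \<and> (\<forall>t\<ge>0. p (t + \<tau>) = p t) \<and> ((\<lambda>t. y t - p t) \<longlongrightarrow> 0) at_top"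
proof -
  obtain w where w: "(\<lambda>n. y (real n * \<tau>)) \<longlonglongrightarrow> w"
    using samples_convergent[OF assms] unfolding convergent_def by blast
  have periodic: "flow w (s + real n * \<tau>) = flow w s" if "0 \<le> s" for s n
    by (rule flow_periodic[OF sample_limit_periodic[OF w] that])
  have "uniform_limit {0..\<tau>} (\<lambda>n s. flow (y (real n * \<tau>)) s - flow w s) (\<lambda>s. flow w s - flow w s)
      sequentially"
    using uniform_limit_flow[OF _ w] period_pos by (intro uniform_limit_minus uniform_limit_const) simp
  from uniform_limit_add[OF segments_track_flow this]
  have "uniform_limit {0..\<tau>} (\<lambda>n s. y (s + real n * \<tau>) - flow w (s + real n * \<tau>)) (\<lambda>_. 0) sequentially"
    by (subst (asm) uniform_limit_cong') (auto simp: periodic)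
  then have "((\<lambda>t. y t - flow w t) \<longlongrightarrow> 0) at_top"
    by (rule tendsto_zero_if_uniform_limit_on_periods[OF period_pos])
  moreover have "\<forall>t\<ge>0. flow w (t + \<tau>) = flow w t" using periodic[of _ 1] by simp
  ultimately show ?thesis using continuous_on_flow by blast
qed

end

theorem mainTheorem15:
  fixes \<tau> u0 :: real and f P R :: "real \<Rightarrow> real \<Rightarrow> real" and y :: "real \<Rightarrow> real"
  assumes "\<tau> > 0"
    and "cont_RR f"
    and "regular f"
    and "asympt_periodic_decomp \<tau> f P R"
    and "periodic_solutions_isolated \<tau> P"
    and "is_solution f u0 y"
    and "bounded (y ` {0..})"
  shows "\<exists>p. continuous_on {0..} p \<and> (\<forall>t\<ge>0. p (t + \<tau>) = p t) \<and>
           ((\<lambda>t. y t - p t) \<longlongrightarrow> 0) at_top"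
proof -
  interpret asymptotically_periodic_bounded_solution \<tau> f P R u0 y
    using assms(1,3,4,6,7) by unfold_locales
  show ?thesis by (rule asymptotically_periodic[OF assms(5)])
qed

end
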